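(* Let $\ell_1,\ldots,\ell_4$ be four distinct lines in $\mathbb{R}^2$ given by $L_i=0$, where $L_i=A_ix+B_iy+C_i$ (real coefficients, $(A_i,B_i)\neq(0,0)$), $i=1,\ldots,4$. Assume that no two of $\ell_1,\ell_2,\ell_3$ are parallel and that $\ell_4$ is parallel to neither $\ell_1$ nor $\ell_2$. Let $f(x,y)=L_1L_2L_3+L_4$ and let $\Gamma$ be the real algebraic cubic curve $f(x,y)=0$. Then $f$ is irreducible, and $\Gamma$ is asymptotic to each of the lines $\ell_1,\ell_2,\ell_3$. *)

theory Defs
  imports "HOL-Analysis.Analysis" "HOL-Computational_Algebra.Polynomial_Factorial"
begin

text \<open>Bivariate real polynomials are represented as elements of R[x][y], i.e. the type
  real poly poly: a polynomial in y whose coefficients are polynomials in x.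
  This ring is isomorphic to R[x,y].\<close>

definition eval2 :: "real poly poly \<Rightarrow> real \<Rightarrow> real \<Rightarrow> real" where
  "eval2 p x y = poly (map_poly (\<lambda>c. poly c x) p) y"

definition linpoly :: "real \<Rightarrow> real \<Rightarrow> real \<Rightarrow> real poly poly" where
  "linpoly A B C = [: [:C, A:], [:B:] :]"

definition line :: "real \<Rightarrow> real \<Rightarrow> real \<Rightarrow> (real \<times> real) set" where
  "line A B C = {p. A * fst p + B * snd p + C = 0}"

definition zero_set :: "real poly poly \<Rightarrow> (real \<times> real) set" where
  "zero_set f = {p. eval2 f (fst p) (snd p) = 0}"

definition parallel :: "real \<Rightarrow> real \<Rightarrow> real \<Rightarrow> real \<Rightarrow> bool" where
  "parallel A B A' B' \<longleftrightarrow> A * B' - A' * B = 0"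

definition asymptotic_to :: "(real \<times> real) set \<Rightarrow> (real \<times> real) set \<Rightarrow> bool" where
  "asymptotic_to G S \<longleftrightarrow>
     (\<exists>\<gamma> :: real \<Rightarrow> real \<times> real.
        continuous_on {0..} \<gamma> \<and> \<gamma> ` {0..} \<subseteq> G \<and>
        filterlim (\<lambda>t. norm (\<gamma> t)) at_top at_top \<and>
        ((\<lambda>t. infdist (\<gamma> t) S) \<longlongrightarrow> 0) at_top)"

end

theory Submission
  imports Defs "HOL-Real_Asymp.Real_Asymp"
begin

text \<open>
  Irreducibility rests on the weight \<open>deg\<^sub>y p + deg\<^sub>x (lc\<^sub>y p)\<close> on \<open>\<real>[x][y]\<close>, which is
  additive on products. The cubic has weight 3 and units have weight 0, while a factor of
  weight 1 is either of degree 1 in \<open>x\<close> alone or of the form \<open>c y + a(x)\<close>, so the cubic would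
  vanish on a vertical line or on a graph \<open>y = h(x)\<close>. Restricted to such a curve the cubic is a
  univariate polynomial of too large a degree, unless the curve lies both in some \<open>\<ell>\<^sub>i\<close>,
  \<open>i \<le> 3\<close>, and in \<open>\<ell>\<^sub>4\<close>; here one uses that at most one of \<open>\<ell>\<^sub>1, \<ell>\<^sub>2, \<ell>\<^sub>3\<close> is parallel
  to any given direction.

  For the asymptote \<open>\<ell>\<^sub>i\<close>, take \<open>u = L\<^sub>i\<close> and \<open>v = L\<^sub>j\<close> (\<open>j \<noteq> i\<close>, \<open>j \<le> 3\<close>) as affine
  coordinates. The curve becomes \<open>u v (a u + b v + c) + d u + e v + g = 0\<close> with \<open>b \<noteq> 0\<close>, since
  the third line is not parallel to \<open>\<ell>\<^sub>i\<close>. For large \<open>v\<close> this quadratic in \<open>u\<close> has a root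
  \<open>u(v) = O(1/v)\<close>, and the points \<open>(u(v), v)\<close> form a branch running off to infinity along \<open>\<ell>\<^sub>i\<close>.
\<close>

lemma map_poly_poly_add:
  "map_poly (\<lambda>c. poly c x) (p + q) = map_poly (\<lambda>c. poly c x) p + map_poly (\<lambda>c. poly c x) q"
  by (rule poly_eqI) (simp add: coeff_map_poly)

lemma map_poly_poly_mult:
  "map_poly (\<lambda>c. poly c x) (p * q) = map_poly (\<lambda>c. poly c x) p * map_poly (\<lambda>c. poly c x) q"
  by (rule poly_eqI) (simp add: coeff_map_poly coeff_mult poly_sum)

lemma eval2_add: "eval2 (p + q) x y = eval2 p x y + eval2 q x y"
  by (simp add: eval2_def map_poly_poly_add)

lemma eval2_mult: "eval2 (p * q) x y = eval2 p x y * eval2 q x y"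
  by (simp add: eval2_def map_poly_poly_mult)

lemma eval2_0 [simp]: "eval2 0 x y = 0"
  by (simp add: eval2_def)

lemma eval2_pCons [simp]: "eval2 (pCons a p) x y = poly a x + y * eval2 p x y"
  by (simp add: eval2_def map_poly_pCons)

lemma eval2_linpoly: "eval2 (linpoly A B C) x y = A * x + B * y + C"
  by (simp add: linpoly_def algebra_simps)

lemma degree_le_1_eq: "degree (p :: 'a::zero poly) \<le> 1 \<Longrightarrow> p = [:coeff p 0, coeff p 1:]"
  by (rule poly_eqI) (auto simp: coeff_pCons coeff_eq_0 split: nat.split)

definition lead_weight :: "'a::zero poly poly \<Rightarrow> nat" where
  "lead_weight p = degree p + degree (lead_coeff p)"

lemma lead_weight_mult:
  fixes p q :: "'a::idom poly poly"
  assumes "p \<noteq> 0" "q \<noteq> 0"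
  shows "lead_weight (p * q) = lead_weight p + lead_weight q"
proof -
  have "lead_coeff p \<noteq> 0" "lead_coeff q \<noteq> 0"
    using assms by simp_all
  then show ?thesis
    using assms by (simp only: lead_weight_def lead_coeff_mult) (simp add: degree_mult_eq)
qed

lemma lead_weight_add_eq_left:
  fixes p q :: "'a::comm_ring_1 poly poly"
  assumes "degree q < degree p"
  shows "lead_weight (p + q) = lead_weight p"
  using assms lead_coeff_add_le[OF assms]
  by (simp add: lead_weight_def degree_add_eq_left add.commute)

lemma lead_weight_linpoly: "(A, B) \<noteq> (0, 0) \<Longrightarrow> lead_weight (linpoly A B C) = 1"
  by (auto simp: lead_weight_def linpoly_def)

lemma is_unit_iff_lead_weight_eq_0:
  fixes p :: "'a::field poly poly"
  assumes "p \<noteq> 0"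
  shows "is_unit p \<longleftrightarrow> lead_weight p = 0"
proof
  assume "is_unit p"
  then show "lead_weight p = 0"
    by (auto simp: is_unit_poly_iff lead_weight_def)
next
  assume "lead_weight p = 0"
  then have "degree p = 0" "degree (lead_coeff p) = 0"
    by (auto simp: lead_weight_def)
  then obtain c where "p = [:[:c:]:]"
    by (metis degree_0_id degree_eq_zeroE)
  with assms show "is_unit p"
    by (auto simp: is_unit_poly_iff dvd_field_iff)
qed

lemma lead_weight_eq_1_zero_curve:
  fixes a :: "real poly poly"
  assumes "lead_weight a = 1"
  shows "(\<exists>x0. \<forall>y. eval2 a x0 y = 0) \<or> (\<exists>h. \<forall>x. eval2 a x (poly h x) = 0)"
proof -
  have "degree a = 0 \<and> degree (lead_coeff a) = 1 \<or> degree a = 1 \<and> degree (lead_coeff a) = 0"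
    using assms by (auto simp: lead_weight_def)
  then show ?thesis
  proof (elim disjE conjE)
    assume "degree a = 0" "degree (lead_coeff a) = 1"
    define c where "c = lead_coeff a"
    have a: "a = [:c:]"
      using \<open>degree a = 0\<close> by (simp add: c_def degree_0_id)
    have "degree c = 1"
      using \<open>degree (lead_coeff a) = 1\<close> by (simp add: c_def)
    define c0 c1 where "c0 = coeff c 0" and "c1 = coeff c 1"
    have "c = [:c0, c1:]"
      unfolding c0_def c1_def using \<open>degree c = 1\<close> by (intro degree_le_1_eq) simp
    moreover have "c1 \<noteq> 0"
      unfolding c1_def using \<open>degree c = 1\<close> leading_coeff_neq_0[of c] by fastforce
    ultimately have "\<forall>y. eval2 a (- c0 / c1) y = 0"
      unfolding a by simp
    then show ?thesis by blast
  next
    assume "degree a = 1" "degree (lead_coeff a) = 0"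
    define c where "c = coeff (coeff a 1) 0"
    have "coeff a 1 = [:c:]"
      using \<open>degree a = 1\<close> \<open>degree (lead_coeff a) = 0\<close> by (simp add: c_def degree_0_id)
    then have a: "a = [:coeff a 0, [:c:]:]"
      using \<open>degree a = 1\<close> degree_le_1_eq[of a] by simp
    have "c \<noteq> 0"
      using \<open>degree a = 1\<close> \<open>coeff a 1 = [:c:]\<close> leading_coeff_neq_0[of a] by fastforce
    have "\<forall>x. eval2 a x (poly (smult (- 1 / c) (coeff a 0)) x) = 0"
      using \<open>c \<noteq> 0\<close> by (subst a) simp
    then show ?thesis by blast
  qed
qed

lemma irreducible_if_no_zero_line_or_graph:
  fixes f :: "real poly poly"
  assumes weight: "0 < lead_weight f" "lead_weight f \<le> 3"
    and no_vertical: "\<And>x0. \<exists>y. eval2 f x0 y \<noteq> 0"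
    and no_graph: "\<And>h. \<exists>x. eval2 f x (poly h x) \<noteq> 0"
  shows "irreducible f"
proof (rule irreducibleI)
  show f0: "f \<noteq> 0"
    using weight by (auto simp: lead_weight_def)
  show "\<not> is_unit f"
    using weight is_unit_iff_lead_weight_eq_0[OF f0] by simp
  have no_weight_1: "lead_weight c \<noteq> 1" if "f = c * d" for c d
  proof
    assume "lead_weight c = 1"
    then consider x0 where "\<forall>y. eval2 c x0 y = 0" | h where "\<forall>x. eval2 c x (poly h x) = 0"
      using lead_weight_eq_1_zero_curve by blast
    then show False
    proof cases
      case 1
      then show False using no_vertical[of x0] by (simp add: that eval2_mult)
    next
      case 2
      then show False using no_graph[of h] by (simp add: that eval2_mult)
    qed
  qed
  fix a b
  assume fab: "f = a * b"
  then have "a \<noteq> 0" "b \<noteq> 0"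
    using f0 by auto
  moreover have "lead_weight a \<noteq> 1" "lead_weight b \<noteq> 1"
    using no_weight_1[OF fab] no_weight_1[of b a] fab by (simp_all add: mult.commute)
  moreover have "lead_weight a + lead_weight b \<le> 3"
    using weight lead_weight_mult[OF \<open>a \<noteq> 0\<close> \<open>b \<noteq> 0\<close>] fab by simp
  ultimately have "lead_weight a = 0 \<or> lead_weight b = 0"
    by arith
  then show "is_unit a \<or> is_unit b"
    using is_unit_iff_lead_weight_eq_0 \<open>a \<noteq> 0\<close> \<open>b \<noteq> 0\<close> by blast
qed

lemma perp_iff_parallel:
  fixes A B w1 w2 X Y :: real
  assumes "(A, B) \<noteq> (0, 0)" "(w1, w2) \<noteq> (0, 0)" "A * w1 + B * w2 = 0"
  shows "A * X + B * Y = 0 \<longleftrightarrow> X * w2 = Y * w1"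
proof
  assume h: "A * X + B * Y = 0"
  have "A * (X * w2 - Y * w1) = w2 * (A * X + B * Y) - Y * (A * w1 + B * w2)"
       "B * (X * w2 - Y * w1) = X * (A * w1 + B * w2) - w1 * (A * X + B * Y)"
    by (simp_all add: algebra_simps)
  then show "X * w2 = Y * w1"
    using h assms(1,3) by auto
next
  assume h: "X * w2 = Y * w1"
  have "w1 * (A * X + B * Y) = X * (A * w1 + B * w2) - B * (X * w2 - Y * w1)"
       "w2 * (A * X + B * Y) = Y * (A * w1 + B * w2) + A * (X * w2 - Y * w1)"
    by (simp_all add: algebra_simps)
  then show "A * X + B * Y = 0"
    using h assms(2,3) by auto
qed

lemma line_eq_through_point:
  assumes "(A, B) \<noteq> (0, 0)" "(w1, w2) \<noteq> (0, 0)" "A * w1 + B * w2 = 0" "A * p1 + B * p2 + C = 0"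
  shows "line A B C = {q. (fst q - p1) * w2 = (snd q - p2) * w1}"
proof -
  have "A * fst q + B * snd q + C = A * (fst q - p1) + B * (snd q - p2)" for q
    using assms(4) by (simp add: algebra_simps)
  then show ?thesis
    using perp_iff_parallel[OF assms(1-3)] by (auto simp: line_def)
qed

lemma small_root_branch:
  fixes a c d e g :: real
  obtains T r where "continuous_on {T..} r" "(r \<longlongrightarrow> 0) at_top"
    "\<And>v. v \<ge> T \<Longrightarrow> r v * v * (a * r v + v + c) + d * r v + e * v + g = 0"
proof -
  \<comment> \<open>\<open>r v\<close> is the root \<open>(- \<beta> v + sqrt (D v)) / (2 a v)\<close> of \<open>a v r\<^sup>2 + \<beta> v r + (e v + g)\<close>,
    written in rationalized form so that it also covers \<open>a = 0\<close>.\<close>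
  define \<beta> where "\<beta> v = v\<^sup>2 + c * v + d" for v :: real
  define D where "D v = (\<beta> v)\<^sup>2 - 4 * a * v * (e * v + g)" for v
  define r where "r v = - 2 * (e * v + g) / (\<beta> v + sqrt (D v))" for v
  have "eventually (\<lambda>v. \<beta> v > 0) at_top" "eventually (\<lambda>v. D v \<ge> 0) at_top"
    unfolding \<beta>_def D_def by real_asymp+
  from eventually_conj[OF this] obtain T where T: "\<And>v. v \<ge> T \<Longrightarrow> \<beta> v > 0 \<and> D v \<ge> 0"
    unfolding eventually_at_top_linorder by blast
  have denom_pos: "\<beta> v + sqrt (D v) > 0" if "v \<ge> T" for v
    using T[OF that] by (simp add: add_pos_nonneg)
  then have "\<beta> v + sqrt (D v) \<noteq> 0" if "v \<ge> T" for v
    using that by (metis less_irrefl)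
  moreover have "continuous_on {T..} \<beta>" "continuous_on {T..} D"
    unfolding \<beta>_def D_def by (intro continuous_intros)+
  ultimately have "continuous_on {T..} r"
    unfolding r_def by (intro continuous_intros) auto
  moreover have "(r \<longlongrightarrow> 0) at_top"
    unfolding r_def \<beta>_def D_def by real_asymp
  moreover have "r v * v * (a * r v + v + c) + d * r v + e * v + g = 0" if "v \<ge> T" for v
  proof -
    define s where "s = sqrt (D v)"
    define q where "q = \<beta> v + s"
    have "s\<^sup>2 = D v"
      using T[OF that] by (simp add: s_def)
    have "q \<noteq> 0"
      using denom_pos[OF that] by (simp add: q_def s_def)
    have "q\<^sup>2 - 2 * \<beta> v * q + 4 * a * v * (e * v + g) = 0"
      using \<open>s\<^sup>2 = D v\<close> unfolding q_def D_def by (simp add: power2_eq_square algebra_simps)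
    moreover have "r v * v * (a * r v + v + c) + d * r v + e * v + g
        = (e * v + g) / q\<^sup>2 * (q\<^sup>2 - 2 * \<beta> v * q + 4 * a * v * (e * v + g))"
      using \<open>q \<noteq> 0\<close> unfolding r_def s_def[symmetric] q_def[symmetric] unfolding \<beta>_def
      by (simp add: field_simps power2_eq_square)
    ultimately show ?thesis
      by simp
  qed
  ultimately show ?thesis
    using that by blast
qed

lemma infdist_line_le:
  assumes "(A, B) \<noteq> (0, 0)"
  shows "infdist p (line A B C) \<le> \<bar>A * fst p + B * snd p + C\<bar> / norm (A, B)"
proof -
  define l where "l = A * fst p + B * snd p + C"
  define s where "s = l / (norm (A, B))\<^sup>2"
  define q where "q = p - s *\<^sub>R (A, B)"
  have "norm (A, B) > 0"
    using assms by (simp add: zero_prod_def)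
  have "(norm (A, B))\<^sup>2 = A\<^sup>2 + B\<^sup>2"
    by (simp add: norm_Pair)
  have "A * fst q + B * snd q + C = l - s * (A\<^sup>2 + B\<^sup>2)"
    by (simp add: q_def l_def algebra_simps power2_eq_square)
  also have "\<dots> = 0"
    using \<open>norm (A, B) > 0\<close> by (simp add: s_def \<open>(norm (A, B))\<^sup>2 = A\<^sup>2 + B\<^sup>2\<close>[symmetric])
  finally have "q \<in> line A B C"
    by (simp add: line_def)
  then have "infdist p (line A B C) \<le> dist p q"
    by (rule infdist_le)
  also have "\<dots> = \<bar>s\<bar> * norm (A, B)"
    by (simp add: q_def dist_norm del: scaleR_Pair)
  also have "\<dots> = \<bar>l\<bar> / norm (A, B)"
    using \<open>norm (A, B) > 0\<close> by (simp add: s_def power2_eq_square)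
  finally show ?thesis
    by (simp add: l_def)
qed

lemma affine_le_norm: "A * fst p + B * snd p + C \<le> norm (A, B) * norm p + \<bar>C\<bar>"
proof -
  have "A * fst p + B * snd p = inner (A, B) p"
    by (simp add: inner_prod_def)
  also have "\<dots> \<le> norm (A, B) * norm p"
    by (rule norm_cauchy_schwarz)
  finally show ?thesis
    by linarith
qed

lemma asymptotic_to_lineI:
  fixes \<gamma> :: "real \<Rightarrow> real \<times> real"
  assumes "(A, B) \<noteq> (0, 0)" and "continuous_on {0..} \<gamma>" "\<gamma> ` {0..} \<subseteq> G"
    and to_line: "((\<lambda>t. A * fst (\<gamma> t) + B * snd (\<gamma> t) + C) \<longlongrightarrow> 0) at_top"
    and to_infinity: "filterlim (\<lambda>t. A' * fst (\<gamma> t) + B' * snd (\<gamma> t) + C') at_top at_top"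
  shows "asymptotic_to G (line A B C)"
  unfolding asymptotic_to_def
proof (intro exI conjI)
  show "continuous_on {0..} \<gamma>" "\<gamma> ` {0..} \<subseteq> G"
    by fact+
  define K where "K = norm (A', B') + 1"
  have "K > 0"
    by (simp add: K_def add_nonneg_pos)
  then have "filterlim (\<lambda>x. (x - \<bar>C'\<bar>) / K) at_top at_top"
    by real_asymp
  from filterlim_compose[OF this to_infinity]
  show "filterlim (\<lambda>t. norm (\<gamma> t)) at_top at_top"
  proof (rule filterlim_at_top_mono, intro always_eventually allI)
    fix t
    have "A' * fst (\<gamma> t) + B' * snd (\<gamma> t) + C' \<le> norm (A', B') * norm (\<gamma> t) + \<bar>C'\<bar>"
      by (rule affine_le_norm)
    also have "\<dots> \<le> K * norm (\<gamma> t) + \<bar>C'\<bar>"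
      by (simp add: K_def distrib_right)
    finally show "(A' * fst (\<gamma> t) + B' * snd (\<gamma> t) + C' - \<bar>C'\<bar>) / K \<le> norm (\<gamma> t)"
      using \<open>K > 0\<close> by (simp add: divide_le_eq mult.commute)
  qed
  show "((\<lambda>t. infdist (\<gamma> t) (line A B C)) \<longlongrightarrow> 0) at_top"
  proof (rule Lim_null_comparison)
    show "eventually (\<lambda>t. norm (infdist (\<gamma> t) (line A B C))
        \<le> \<bar>A * fst (\<gamma> t) + B * snd (\<gamma> t) + C\<bar> / norm (A, B)) at_top"
      using infdist_line_le[OF assms(1)] by (simp add: infdist_nonneg)
    show "((\<lambda>t. \<bar>A * fst (\<gamma> t) + B * snd (\<gamma> t) + C\<bar> / norm (A, B)) \<longlongrightarrow> 0) at_top"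
      using tendsto_divide_zero[OF tendsto_rabs_zero[OF to_line]] .
  qed
qed

lemma cubic_asymptotic_to_line:
  fixes Ai Bi Ci Aj Bj Cj Ak Bk Ck A4 B4 C4 :: real
  assumes ij: "Ai * Bj - Aj * Bi \<noteq> 0" and ik: "Ai * Bk - Ak * Bi \<noteq> 0"
  shows "asymptotic_to {p. (Ai * fst p + Bi * snd p + Ci) * (Aj * fst p + Bj * snd p + Cj)
           * (Ak * fst p + Bk * snd p + Ck) + (A4 * fst p + B4 * snd p + C4) = 0} (line Ai Bi Ci)"
    (is "asymptotic_to ?G _")
proof -
  define \<Delta> where "\<Delta> = Ai * Bj - Aj * Bi"
  \<comment> \<open>\<open>P u v\<close> is the point where the \<open>i\<close>-th form takes the value \<open>u\<close> and the \<open>j\<close>-th the value \<open>v\<close>.\<close>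
  define P where "P u v = (((u - Ci) * Bj - (v - Cj) * Bi) / \<Delta>, (Ai * (v - Cj) - Aj * (u - Ci)) / \<Delta>)"
    for u v
  define \<alpha> where "\<alpha> A B = (A * Bj - B * Aj) / \<Delta>" for A B
  define \<beta> where "\<beta> A B = (B * Ai - A * Bi) / \<Delta>" for A B
  define \<kappa> where "\<kappa> A B C = (A * (Cj * Bi - Ci * Bj) + B * (Aj * Ci - Ai * Cj)) / \<Delta> + C" for A B C
  have "\<Delta> \<noteq> 0"
    using ij by (simp add: \<Delta>_def)
  then have affine: "A * fst (P u v) + B * snd (P u v) + C = \<alpha> A B * u + \<beta> A B * v + \<kappa> A B C"
    for A B C u v
    by (simp add: P_def \<alpha>_def \<beta>_def \<kappa>_def field_simps)
  have "\<alpha> Ai Bi = 1" "\<beta> Ai Bi = 0" "\<kappa> Ai Bi Ci = 0" "\<alpha> Aj Bj = 0" "\<beta> Aj Bj = 1" "\<kappa> Aj Bj Cj = 0"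
    using \<open>\<Delta> \<noteq> 0\<close> by (simp_all add: \<alpha>_def \<beta>_def \<kappa>_def field_simps) (simp_all add: \<Delta>_def algebra_simps)
  then have Li: "Ai * fst (P u v) + Bi * snd (P u v) + Ci = u"
    and Lj: "Aj * fst (P u v) + Bj * snd (P u v) + Cj = v" for u v
    by (simp_all add: affine)
  define b where "b = \<beta> Ak Bk"
  have "b \<noteq> 0"
    using ij ik by (simp add: b_def \<beta>_def \<Delta>_def algebra_simps)
  obtain T r where r: "continuous_on {T..} r" "(r \<longlongrightarrow> 0) at_top"
    and root: "\<And>v. v \<ge> T \<Longrightarrow> r v * v * (\<alpha> Ak Bk / b * r v + v + \<kappa> Ak Bk Ck / b)
      + \<alpha> A4 B4 / b * r v + \<beta> A4 B4 / b * v + \<kappa> A4 B4 C4 / b = 0"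
    using small_root_branch[of "\<alpha> Ak Bk / b" "\<kappa> Ak Bk Ck / b" "\<alpha> A4 B4 / b" "\<beta> A4 B4 / b"
        "\<kappa> A4 B4 C4 / b"] by blast
  have factor: "u * v * (\<alpha> Ak Bk * u + b * v + \<kappa> Ak Bk Ck) + (\<alpha> A4 B4 * u + \<beta> A4 B4 * v + \<kappa> A4 B4 C4)
    = b * (u * v * (\<alpha> Ak Bk / b * u + v + \<kappa> Ak Bk Ck / b)
        + \<alpha> A4 B4 / b * u + \<beta> A4 B4 / b * v + \<kappa> A4 B4 C4 / b)" for u v
    using \<open>b \<noteq> 0\<close> by (simp add: field_simps)
  define \<gamma> where "\<gamma> t = P (r (T + t)) (T + t)" for t
  show ?thesis
  proof (rule asymptotic_to_lineI)
    show "(Ai, Bi) \<noteq> (0, 0)"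
      using ij by auto
    have "continuous_on {0..} (\<lambda>t. r (T + t))"
      by (rule continuous_on_compose2[OF r(1)], intro continuous_intros) auto
    then show "continuous_on {0..} \<gamma>"
      unfolding \<gamma>_def P_def using ij by (intro continuous_intros) (auto simp: \<Delta>_def)
    show "\<gamma> ` {0..} \<subseteq> ?G"
    proof (rule image_subsetI, unfold mem_Collect_eq)
      fix t :: real
      assume "t \<in> {0..}"
      show "(Ai * fst (\<gamma> t) + Bi * snd (\<gamma> t) + Ci) * (Aj * fst (\<gamma> t) + Bj * snd (\<gamma> t) + Cj)
           * (Ak * fst (\<gamma> t) + Bk * snd (\<gamma> t) + Ck) + (A4 * fst (\<gamma> t) + B4 * snd (\<gamma> t) + C4) = 0"
        unfolding \<gamma>_def Li Lj unfolding affine b_def[symmetric] factor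
        using root[of "T + t"] \<open>t \<in> {0..}\<close> by simp
    qed
    have "filterlim (\<lambda>t. T + t) at_top at_top"
      by real_asymp
    then show "((\<lambda>t. Ai * fst (\<gamma> t) + Bi * snd (\<gamma> t) + Ci) \<longlongrightarrow> 0) at_top"
      unfolding \<gamma>_def Li using filterlim_compose[OF r(2)] by blast
    show "filterlim (\<lambda>t. Aj * fst (\<gamma> t) + Bj * snd (\<gamma> t) + Cj) at_top at_top"
      unfolding \<gamma>_def Lj using \<open>filterlim (\<lambda>t. T + t) at_top at_top\<close> .
  qed
qed

definition cubic :: "(nat \<Rightarrow> real) \<Rightarrow> (nat \<Rightarrow> real) \<Rightarrow> (nat \<Rightarrow> real) \<Rightarrow> real poly poly" where
  "cubic A B C = linpoly (A 1) (B 1) (C 1) * linpoly (A 2) (B 2) (C 2) * linpoly (A 3) (B 3) (C 3)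
                 + linpoly (A 4) (B 4) (C 4)"

lemma eval2_cubic:
  "eval2 (cubic A B C) x y
     = (A 1 * x + B 1 * y + C 1) * (A 2 * x + B 2 * y + C 2) * (A 3 * x + B 3 * y + C 3)
       + (A 4 * x + B 4 * y + C 4)"
  by (simp add: cubic_def eval2_add eval2_mult eval2_linpoly)

context
  fixes A B C :: "nat \<Rightarrow> real"
  assumes nz: "\<And>i. i \<in> {1..4} \<Longrightarrow> (A i, B i) \<noteq> (0, 0)"
    and distinct: "\<And>i j. i \<in> {1..4} \<Longrightarrow> j \<in> {1..4} \<Longrightarrow> i \<noteq> j \<Longrightarrow>
                     line (A i) (B i) (C i) \<noteq> line (A j) (B j) (C j)"
    and np123: "\<And>i j. i \<in> {1..3} \<Longrightarrow> j \<in> {1..3} \<Longrightarrow> i \<noteq> j \<Longrightarrow>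
                     \<not> parallel (A i) (B i) (A j) (B j)"
begin

lemma not_both_orthogonal:
  assumes "i \<in> {1..3}" "j \<in> {1..3}" "i \<noteq> j" "(w1, w2) \<noteq> (0, 0)"
  shows "A i * w1 + B i * w2 \<noteq> 0 \<or> A j * w1 + B j * w2 \<noteq> 0"
proof -
  have "(A i * B j - A j * B i) * w1 = B j * (A i * w1 + B i * w2) - B i * (A j * w1 + B j * w2)"
       "(A i * B j - A j * B i) * w2 = A i * (A j * w1 + B j * w2) - A j * (A i * w1 + B i * w2)"
    by (simp_all add: algebra_simps)
  then show ?thesis
    using np123[OF assms(1-3)] assms(4) by (auto simp: parallel_def)
qed

lemma B_nonzero_pairs: "B 1 \<noteq> 0 \<or> B 2 \<noteq> 0" "B 1 \<noteq> 0 \<or> B 3 \<noteq> 0" "B 2 \<noteq> 0 \<or> B 3 \<noteq> 0"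
  using not_both_orthogonal[of 1 2 0 1] not_both_orthogonal[of 1 3 0 1] not_both_orthogonal[of 2 3 0 1]
  by simp_all

lemma cubic_nonzero_on_line:
  assumes w: "(w1, w2) \<noteq> (0, 0)"
  shows "\<exists>t. eval2 (cubic A B C) (p1 + t * w1) (p2 + t * w2) \<noteq> 0"
proof (rule ccontr)
  assume "\<not> ?thesis"
  define s where "s i = A i * w1 + B i * w2" for i
  define k where "k i = A i * p1 + B i * p2 + C i" for i
  define P where "P i = [:k i, s i:]" for i
  have "poly (P 1 * P 2 * P 3 + P 4) t = eval2 (cubic A B C) (p1 + t * w1) (p2 + t * w2)" for t
    by (simp add: eval2_cubic P_def s_def k_def algebra_simps)
  with \<open>\<not> ?thesis\<close> have "\<forall>t. poly (P 1 * P 2 * P 3 + P 4) t = 0"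
    by simp
  then have sum_eq_0: "P 1 * P 2 * P 3 + P 4 = 0"
    using poly_all_0_iff_0 by blast
  have degP: "degree (P i) = (if s i = 0 then 0 else 1)" for i
    by (simp add: P_def)
  have s_pairs: "s 1 \<noteq> 0 \<or> s 2 \<noteq> 0" "s 1 \<noteq> 0 \<or> s 3 \<noteq> 0" "s 2 \<noteq> 0 \<or> s 3 \<noteq> 0"
    using not_both_orthogonal[of 1 2 w1 w2] not_both_orthogonal[of 1 3 w1 w2]
      not_both_orthogonal[of 2 3 w1 w2] w
    unfolding s_def by simp_all
  have "P 1 * P 2 * P 3 = 0"
  proof (rule ccontr)
    assume "P 1 * P 2 * P 3 \<noteq> 0"
    then have "degree (P 1 * P 2 * P 3) = degree (P 1) + degree (P 2) + degree (P 3)"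
      by (simp add: degree_mult_eq)
    also have "\<dots> \<ge> 2"
      using s_pairs unfolding degP by auto
    finally have "degree (P 4) < degree (P 1 * P 2 * P 3)"
      using degP[of 4] by simp
    from degree_add_eq_left[OF this] this show False
      using sum_eq_0 by simp
  qed
  then obtain i where i: "i \<in> {1..3}" "P i = 0"
    by (auto simp: eval_nat_numeral)
  moreover have "P 4 = 0"
    using sum_eq_0 \<open>P 1 * P 2 * P 3 = 0\<close> by (simp only: add_0)
  ultimately have "line (A m) (B m) (C m) = {q. (fst q - p1) * w2 = (snd q - p2) * w1}"
    if "m \<in> {i, 4}" for m
    using that nz[of m] by (intro line_eq_through_point w) (auto simp: P_def s_def k_def)
  then show False
    using distinct[of i 4] i by auto
qed

lemma cubic_nonzero_on_vertical_line: "\<exists>y. eval2 (cubic A B C) x0 y \<noteq> 0"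
  using cubic_nonzero_on_line[of 0 1 x0 0] by auto

lemma cubic_nonzero_on_graph: "\<exists>x. eval2 (cubic A B C) x (poly h x) \<noteq> 0"
proof (cases "degree h \<le> 1")
  case True
  have "poly h t = coeff h 0 + t * coeff h 1" for t
    by (subst degree_le_1_eq[OF True]) (simp add: algebra_simps)
  then show ?thesis
    using cubic_nonzero_on_line[of 1 "coeff h 1" 0 "coeff h 0"] by auto
next
  case False
  define n where "n = degree h"
  define Q where "Q i = [:C i, A i:] + smult (B i) h" for i
  have "poly (Q 1 * Q 2 * Q 3 + Q 4) x = eval2 (cubic A B C) x (poly h x)" for x
    by (simp add: eval2_cubic Q_def algebra_simps)
  moreover have "degree (Q 4) < degree (Q 1 * Q 2 * Q 3)"
  proof -
    have degQ: "degree (Q i) = (if B i = 0 then degree [:C i, A i:] else n)" for i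
      using False by (auto simp: Q_def n_def degree_add_eq_right)
    have degQ_ge_1: "degree (Q i) \<ge> 1" if "i \<in> {1..3}" for i
      using nz[of i] that False by (auto simp: degQ n_def)
    then have "Q i \<noteq> 0" if "i \<in> {1..3}" for i
      using that by force
    then have "degree (Q 1 * Q 2 * Q 3) = degree (Q 1) + degree (Q 2) + degree (Q 3)"
      by (simp add: degree_mult_eq)
    also have "\<dots> \<ge> 2 * n + 1"
      using B_nonzero_pairs degQ_ge_1[of 1] degQ_ge_1[of 2] degQ_ge_1[of 3] degQ[of 1] degQ[of 2] degQ[of 3]
      by (cases "B 1 = 0"; cases "B 2 = 0"; cases "B 3 = 0") simp_all
    finally show ?thesis
      using False degQ[of 4] by (auto simp: n_def)
  qed
  then have "Q 1 * Q 2 * Q 3 + Q 4 \<noteq> 0"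
    using degree_add_eq_left[of "Q 4" "Q 1 * Q 2 * Q 3"] by auto
  ultimately show ?thesis
    using poly_all_0_iff_0 by metis
qed

lemma lead_weight_cubic: "lead_weight (cubic A B C) = 3"
proof -
  define L where "L i = linpoly (A i) (B i) (C i)" for i
  have degL: "degree (L i) = (if B i = 0 then 0 else 1)" for i
    by (simp add: L_def linpoly_def)
  have L0: "L i \<noteq> 0" and weightL: "lead_weight (L i) = 1" if "i \<in> {1..4}" for i
    using nz[OF that] lead_weight_linpoly by (auto simp: L_def linpoly_def)
  have "degree (L 1 * L 2 * L 3) = degree (L 1) + degree (L 2) + degree (L 3)"
    using L0 by (simp add: degree_mult_eq)
  also have "\<dots> \<ge> 2"
    using B_nonzero_pairs unfolding degL by auto
  finally have "degree (L 4) < degree (L 1 * L 2 * L 3)"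
    using degL[of 4] by simp
  then have "lead_weight (cubic A B C) = lead_weight (L 1 * L 2 * L 3)"
    unfolding cubic_def L_def by (rule lead_weight_add_eq_left)
  also have "\<dots> = 3"
    using L0 weightL by (simp add: lead_weight_mult)
  finally show ?thesis .
qed

lemma irreducible_cubic: "irreducible (cubic A B C)"
  using lead_weight_cubic cubic_nonzero_on_vertical_line cubic_nonzero_on_graph
  by (intro irreducible_if_no_zero_line_or_graph) auto

end

lemma cubic_asymptotic_to_lines:
  fixes A B C :: "nat \<Rightarrow> real"
  assumes np123: "\<And>i j. i \<in> {1..3} \<Longrightarrow> j \<in> {1..3} \<Longrightarrow> i \<noteq> j \<Longrightarrow>
                     \<not> parallel (A i) (B i) (A j) (B j)"
    and "i \<in> {1..3}"
  shows "asymptotic_to (zero_set (cubic A B C)) (line (A i) (B i) (C i))"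
proof -
  define L where "L j p = A j * fst p + B j * snd p + C j" for j p
  have zero_set: "zero_set (cubic A B C) = {p. L 1 p * L 2 p * L 3 p + L 4 p = 0}"
    by (simp add: zero_set_def eval2_cubic L_def)
  have np: "A j * B k - A k * B j \<noteq> 0" if "j \<in> {1..3}" "k \<in> {1..3}" "j \<noteq> k" for j k
    using np123[OF that] by (simp add: parallel_def)
  from assms have "i = 1 \<or> i = 2 \<or> i = 3"
    by auto
  then show ?thesis
  proof (elim disjE)
    assume "i = 1"
    then show ?thesis
      using cubic_asymptotic_to_line[OF np[of 1 2] np[of 1 3]] by (simp add: zero_set L_def)
  next
    assume "i = 2"
    have "zero_set (cubic A B C) = {p. L 2 p * L 1 p * L 3 p + L 4 p = 0}"
      by (simp add: zero_set mult_ac)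
    then show ?thesis
      using \<open>i = 2\<close> cubic_asymptotic_to_line[OF np[of 2 1] np[of 2 3]] by (simp add: L_def)
  next
    assume "i = 3"
    have "zero_set (cubic A B C) = {p. L 3 p * L 1 p * L 2 p + L 4 p = 0}"
      by (simp add: zero_set mult_ac)
    then show ?thesis
      using \<open>i = 3\<close> cubic_asymptotic_to_line[OF np[of 3 1] np[of 3 2]] by (simp add: L_def)
  qed
qed

theorem lemma4:
  fixes A B C :: "nat \<Rightarrow> real"
  assumes nz: "\<And>i. i \<in> {1..4} \<Longrightarrow> (A i, B i) \<noteq> (0, 0)"
    and distinct: "\<And>i j. i \<in> {1..4} \<Longrightarrow> j \<in> {1..4} \<Longrightarrow> i \<noteq> j \<Longrightarrow>
                     line (A i) (B i) (C i) \<noteq> line (A j) (B j) (C j)"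
    and np123: "\<And>i j. i \<in> {1..3} \<Longrightarrow> j \<in> {1..3} \<Longrightarrow> i \<noteq> j \<Longrightarrow>
                     \<not> parallel (A i) (B i) (A j) (B j)"
    and np41: "\<not> parallel (A 4) (B 4) (A 1) (B 1)"
    and np42: "\<not> parallel (A 4) (B 4) (A 2) (B 2)"
  defines "f \<equiv> linpoly (A 1) (B 1) (C 1) * linpoly (A 2) (B 2) (C 2) * linpoly (A 3) (B 3) (C 3)
               + linpoly (A 4) (B 4) (C 4)"
  shows "irreducible f \<and>
         (\<forall>i\<in>{1..3}. asymptotic_to (zero_set f) (line (A i) (B i) (C i)))"
proof -
  have "f = cubic A B C"
    by (simp only: f_def cubic_def)
  then show ?thesis
    using irreducible_cubic[of A B C, OF nz distinct np123]
      cubic_asymptotic_to_lines[where A = A and B = B and C = C, OF np123]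
    by simp
qed

end
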